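(* Let $x\in\mathcal A^{\mathbb N}$ and let $\mathcal L=\mathcal L_x$ be the set of finite nonempty subwords of $x$. Let $w\in\mathcal L_n$ have minimal valid step $q$, and let $z=pw^{q\ast r}s$ and $z'=p'w^{q\ast r'}s'$ be exit words of $w$ with step $q$. If $z$ begins at position $i$ of $x$ and $z'$ begins at position $i'>i$ of $x$, then $i'\ge i+|z|-n$. Moreover, $|x_{[i,i'+|z'|-1]}|_w\ge r+r'$.
   Context: $|y|_w$ denotes the number of positions $j$, $1\le j\le |y|-|w|+1$, with $y_{[j,j+|w|-1]}=w$. For $n\ge 2$, $w\in\mathcal A^n$ and integer $1\le q\le n/2$ with $w_{[q+1,n]}=w_{[1,n-q]}$, $w^{q\ast r}$ is the word of length $n+(r-1)q$ with $(w^{q\ast r})_{[q(i-1)+1,q(i-1)+n]}=w$ for $1\le i\le r$; $q$ is valid for $w$ in $\mathcal L$ if moreover $w^{q\ast2}\in\mathcal L$; the minimal valid step is the least one. An exit word for $w$ with step $q$ is a word $z=pw^{q\ast r}s$, $r\ge1$, $1\le|p|,|s|\le q$, such that $z\in\mathcal L$; $pw^{q\ast r}$ is not a suffix of $w^{q\ast(r+1)}$ but $p_{[2,|p|]}w^{q\ast r}$ is; and $w^{q\ast r}s$ is not a prefix of $w^{q\ast(r+1)}$ but $w^{q\ast r}s_{[1,|s|-1]}$ is (with $p_{[2,1]}$, $s_{[1,0]}$ empty). *)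

theory Defs
  imports Main "HOL-Library.Sublist"
begin

text \<open>Infinite words are functions nat => 'a, positions start at 0.
  subword x i j is x_[i,j] (inclusive).\<close>

definition subword :: "(nat \<Rightarrow> 'a) \<Rightarrow> nat \<Rightarrow> nat \<Rightarrow> 'a list" where
  "subword x i j = map x [i..<Suc j]"

definition lang :: "(nat \<Rightarrow> 'a) \<Rightarrow> 'a list set" where
  "lang x = {subword x i j | i j. i \<le> j}"

text \<open>Number of occurrences |y|_w (positions 1-based in the paper, 0-based here).\<close>
definition occ :: "'a list \<Rightarrow> 'a list \<Rightarrow> nat" where
  "occ y w = card {j. j + length w \<le> length y \<and> take (length w) (drop j y) = w}"

definition step_ok :: "'a list \<Rightarrow> nat \<Rightarrow> bool" where
  "step_ok w q \<longleftrightarrow> 2 \<le> length w \<and> 1 \<le> q \<and> 2 * q \<le> length w \<and>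
     drop q w = take (length w - q) w"

definition wpow :: "'a list \<Rightarrow> nat \<Rightarrow> nat \<Rightarrow> 'a list" where
  "wpow w q r = (THE v. length v = length w + (r - 1) * q \<and>
      (\<forall>i\<in>{1..r}. take (length w) (drop (q * (i - 1)) v) = w))"

definition valid_step :: "'a list set \<Rightarrow> 'a list \<Rightarrow> nat \<Rightarrow> bool" where
  "valid_step L w q \<longleftrightarrow> step_ok w q \<and> wpow w q 2 \<in> L"

definition minimal_valid_step :: "'a list set \<Rightarrow> 'a list \<Rightarrow> nat \<Rightarrow> bool" where
  "minimal_valid_step L w q \<longleftrightarrow> valid_step L w q \<and> (\<forall>q'<q. \<not> valid_step L w q')"

definition exit_word :: "'a list set \<Rightarrow> 'a list \<Rightarrow> nat \<Rightarrow> 'a list \<Rightarrow> nat \<Rightarrow> 'a list \<Rightarrow> bool" where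
  "exit_word L w q p r s \<longleftrightarrow>
     1 \<le> r \<and> 1 \<le> length p \<and> length p \<le> q \<and> 1 \<le> length s \<and> length s \<le> q \<and>
     p @ wpow w q r @ s \<in> L \<and>
     \<not> suffix (p @ wpow w q r) (wpow w q (r + 1)) \<and>
     suffix (tl p @ wpow w q r) (wpow w q (r + 1)) \<and>
     \<not> prefix (wpow w q r @ s) (wpow w q (r + 1)) \<and>
     prefix (wpow w q r @ butlast s) (wpow w q (r + 1))"

end

theory Submission
  imports Defs
begin

text \<open>An exit word \<open>z = p w\<^sup>q\<^sup>*\<^sup>r s\<close> is a maximal \<open>q\<close>-periodic run: every letter of \<open>z\<close>
  except the first and the last lies on the \<open>q\<close>-periodic extension \<open>j \<mapsto> w ! (j mod q)\<close> of \<open>w\<close>,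
  whereas \<open>z ! 0 \<noteq> z ! q\<close>. If \<open>z'\<close> starts at \<open>i' > i\<close> and \<open>i' + q + 1 < i + |z|\<close>, the positions
  \<open>i'\<close> and \<open>i' + q\<close> both lie in the periodic part of \<open>z\<close>, contradicting \<open>z' ! 0 \<noteq> z' ! q\<close>.
  Hence \<open>i + |z| \<le> i' + q + 1 \<le> i' + n\<close>, which is the first claim; it also places the \<open>r\<close>
  occurrences of \<open>w\<close> inside \<open>z\<close> before \<open>i'\<close> and the \<open>r'\<close> occurrences inside \<open>z'\<close> at or after it.\<close>

lemma step_ok_nth_mod:
  assumes step: "step_ok w q" and "j < length w"
  shows "w ! j = w ! (j mod q)"
  using assms(2)
proof (induction j rule: less_induct)
  case (less j)
  from step have "1 \<le> q" and per: "drop q w = take (length w - q) w"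
    by (auto simp: step_ok_def)
  show ?case
  proof (cases "j < q")
    case False
    have "w ! j = drop q w ! (j - q)" using False less.prems by simp
    also have "\<dots> = w ! (j - q)" using per False less.prems by simp
    also have "\<dots> = w ! ((j - q) mod q)" using less.IH[of "j - q"] False less.prems \<open>1 \<le> q\<close> by simp
    finally show ?thesis using False by (simp add: le_mod_geq)
  qed simp
qed

lemma map_nth_mod_eq:
  assumes "step_ok w q"
  shows "map (\<lambda>j. w ! (j mod q)) [0..<length w] = w"
  by (rule nth_equalityI) (simp_all add: step_ok_nth_mod[OF assms])

lemma take_drop_map_nth_mod:
  assumes "step_ok w q" and "q * k + length w \<le> L"
  shows "take (length w) (drop (q * k) (map (\<lambda>j. w ! (j mod q)) [0..<L])) = w"
proof -
  have "take (length w) (drop (q * k) (map (\<lambda>j. w ! (j mod q)) [0..<L]))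
      = map (\<lambda>j. w ! (j mod q)) (map (\<lambda>j. j + q * k) [0..<length w])"
    using assms(2) by (simp add: take_map drop_map map_add_upt add.commute)
  also have "\<dots> = map (\<lambda>j. w ! (j mod q)) [0..<length w]" by simp
  finally show ?thesis using map_nth_mod_eq[OF assms(1)] by simp
qed

lemma nth_of_wpow_blocks:
  assumes step: "step_ok w q" and "1 \<le> r"
    and len: "length v = length w + (r - 1) * q"
    and blocks: "\<forall>k\<in>{1..r}. take (length w) (drop (q * (k - 1)) v) = w"
    and j: "j < length v"
  shows "v ! j = w ! (j mod q)"
proof -
  from step have "1 \<le> q" and "2 * q \<le> length w" by (auto simp: step_ok_def)
  define k where "k = min (j div q) (r - 1)"
  have "k + 1 \<in> {1..r}" using \<open>1 \<le> r\<close> by (simp add: k_def)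
  then have block: "take (length w) (drop (q * k) v) = w" using blocks by fastforce
  have "q * k \<le> q * (j div q)" by (simp add: k_def)
  also have "\<dots> \<le> j" by (simp add: mult.commute)
  finally have "q * k \<le> j" .
  have "j - q * k < length w"
  proof (cases "j div q \<le> r - 1")
    case True
    then have "j - q * k = j mod q" by (simp add: k_def minus_mult_div_eq_mod)
    moreover have "j mod q < q" using \<open>1 \<le> q\<close> by simp
    ultimately show ?thesis using \<open>2 * q \<le> length w\<close> by linarith
  next
    case False
    then have "j < length w + q * k" using j len by (simp add: k_def mult.commute)
    then show ?thesis using \<open>q * k \<le> j\<close> by linarith
  qed
  have "v ! j = take (length w) (drop (q * k) v) ! (j - q * k)"
    using \<open>q * k \<le> j\<close> \<open>j - q * k < length w\<close> j by simp
  also have "\<dots> = w ! ((j - q * k) mod q)"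
    using block step_ok_nth_mod[OF step \<open>j - q * k < length w\<close>] by simp
  also have "(j - q * k) mod q = j mod q"
    using \<open>q * k \<le> j\<close> by (metis le_add_diff_inverse2 mod_mult_self2)
  finally show ?thesis .
qed

lemma wpow_eq_map:
  assumes step: "step_ok w q" and "1 \<le> r"
  shows "wpow w q r = map (\<lambda>j. w ! (j mod q)) [0..<length w + (r - 1) * q]"
  unfolding wpow_def
proof (rule the_equality)
  let ?V = "map (\<lambda>j. w ! (j mod q)) [0..<length w + (r - 1) * q]"
  show "length ?V = length w + (r - 1) * q \<and>
      (\<forall>k\<in>{1..r}. take (length w) (drop (q * (k - 1)) ?V) = w)"
  proof (intro conjI ballI)
    fix k assume "k \<in> {1..r}"
    then have "k - 1 \<le> r - 1" by auto
    then have "q * (k - 1) + length w \<le> length w + (r - 1) * q"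
      by (simp add: mult.commute)
    then show "take (length w) (drop (q * (k - 1)) ?V) = w"
      by (rule take_drop_map_nth_mod[OF step])
  qed simp
  fix v assume "length v = length w + (r - 1) * q \<and>
      (\<forall>k\<in>{1..r}. take (length w) (drop (q * (k - 1)) v) = w)"
  then show "v = ?V"
    using nth_of_wpow_blocks[OF step \<open>1 \<le> r\<close>] by (intro nth_equalityI) auto
qed

lemma length_wpow: "step_ok w q \<Longrightarrow> 1 \<le> r \<Longrightarrow> length (wpow w q r) = length w + (r - 1) * q"
  by (simp add: wpow_eq_map)

lemma wpow_Suc_eq_map:
  "step_ok w q \<Longrightarrow> wpow w q (Suc r) = map (\<lambda>j. w ! (j mod q)) [0..<length w + r * q]"
  using wpow_eq_map[of w q "Suc r"] by simp

lemma map_nth_mod_upt_shift: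
  "map (\<lambda>j. w ! (j mod q)) [a + q..<b + q] = map (\<lambda>j. w ! (j mod q)) [a..<b]"
proof (rule nth_equalityI)
  fix i assume "i < length (map (\<lambda>j. w ! (j mod q)) [a + q..<b + q])"
  moreover have "(a + q + i) mod q = (a + i) mod q"
    by (metis add.commute add.left_commute mod_add_self2)
  ultimately show "map (\<lambda>j. w ! (j mod q)) [a + q..<b + q] ! i = map (\<lambda>j. w ! (j mod q)) [a..<b] ! i"
    by simp
qed simp

lemma suffix_imp_drop: "suffix xs ys \<Longrightarrow> drop (length ys - length xs) ys = xs"
  by (auto simp: suffix_def)

lemma take_drop_append_left: "m + n \<le> length xs \<Longrightarrow> take n (drop m (xs @ ys)) = take n (drop m xs)"
  by simp

context
  fixes L :: "'a list set" and w p s :: "'a list" and q r :: nat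
  assumes step: "step_ok w q" and exit: "exit_word L w q p r s"
begin

lemma exit_word_tl_p_wpow:
  "tl p @ wpow w q r = map (\<lambda>j. w ! (j mod q)) [q + 1 - length p..<length w + r * q]"
proof -
  from exit have "1 \<le> r" "1 \<le> length p" "length p \<le> q"
    and suf: "suffix (tl p @ wpow w q r) (wpow w q (Suc r))"
    by (auto simp: exit_word_def)
  then have "length w + r * q = length w + (r - 1) * q + q"
    by (cases r) auto
  then have "length (wpow w q (Suc r)) - length (tl p @ wpow w q r) = q + 1 - length p"
    using \<open>1 \<le> r\<close> \<open>1 \<le> length p\<close> \<open>length p \<le> q\<close>
    by (simp add: wpow_Suc_eq_map[OF step] wpow_eq_map[OF step])
  then show ?thesis
    using suffix_imp_drop[OF suf] by (simp add: wpow_Suc_eq_map[OF step] drop_map)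
qed

lemma exit_word_wpow_butlast_s:
  "wpow w q r @ butlast s = map (\<lambda>j. w ! (j mod q)) [0..<length w + (r - 1) * q + length s - 1]"
proof -
  from exit have "1 \<le> r" "1 \<le> length s" "length s \<le> q"
    and pre: "prefix (wpow w q r @ butlast s) (wpow w q (Suc r))"
    by (auto simp: exit_word_def)
  then have "length w + (r - 1) * q + length s - 1 \<le> length w + r * q"
    by (cases r) auto
  moreover have "wpow w q r @ butlast s
      = take (length w + (r - 1) * q + length s - 1) (wpow w q (Suc r))"
    using pre \<open>1 \<le> r\<close> \<open>1 \<le> length s\<close>
    by (auto simp: prefix_def wpow_eq_map[OF step])
  ultimately show ?thesis by (simp add: wpow_Suc_eq_map[OF step] take_map)
qed

lemma exit_word_butlast_s:
  "butlast s = map (\<lambda>j. w ! (j mod q)) [length w + r * q..<length w + r * q + length s - 1]"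
proof -
  from exit have "1 \<le> r" "1 \<le> length s" by (auto simp: exit_word_def)
  have "butlast s = drop (length w + (r - 1) * q) (wpow w q r @ butlast s)"
    by (simp add: length_wpow[OF step \<open>1 \<le> r\<close>])
  also have "\<dots> = map (\<lambda>j. w ! (j mod q)) [length w + (r - 1) * q..<length w + (r - 1) * q + length s - 1]"
    by (simp only: exit_word_wpow_butlast_s) (simp add: drop_map)
  also have "\<dots> = map (\<lambda>j. w ! (j mod q)) [length w + (r - 1) * q + q..<length w + (r - 1) * q + length s - 1 + q]"
    by (rule map_nth_mod_upt_shift[symmetric])
  also have "\<dots> = map (\<lambda>j. w ! (j mod q)) [length w + r * q..<length w + r * q + length s - 1]"
  proof -
    have "length w + (r - 1) * q + q = length w + r * q"
      and "length w + (r - 1) * q + length s - 1 + q = length w + r * q + length s - 1"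
      using \<open>1 \<le> r\<close> \<open>1 \<le> length s\<close> by (cases r; simp)+
    then show ?thesis by (simp only:)
  qed
  finally show ?thesis .
qed

lemma exit_word_inner:
  "butlast (tl (p @ wpow w q r @ s))
    = map (\<lambda>j. w ! (j mod q)) [q + 1 - length p..<length w + r * q + length s - 1]"
proof -
  from exit have "1 \<le> r" "1 \<le> length p" "1 \<le> length s" "p \<noteq> []" "s \<noteq> []"
    by (auto simp: exit_word_def)
  have le: "q + 1 - length p \<le> length w + r * q"
    using \<open>1 \<le> r\<close> \<open>1 \<le> length p\<close> by (cases r) auto
  have "butlast (tl (p @ wpow w q r @ s)) = (tl p @ wpow w q r) @ butlast s"
    using \<open>p \<noteq> []\<close> \<open>s \<noteq> []\<close> by (simp add: butlast_append)
  also have "\<dots> = map (\<lambda>j. w ! (j mod q)) [q + 1 - length p..<length w + r * q]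
        @ map (\<lambda>j. w ! (j mod q)) [length w + r * q..<length w + r * q + (length s - 1)]"
    using \<open>1 \<le> length s\<close> by (simp only: exit_word_tl_p_wpow exit_word_butlast_s) simp
  also have "\<dots> = map (\<lambda>j. w ! (j mod q)) [q + 1 - length p..<length w + r * q + (length s - 1)]"
    by (simp only: upt_add_eq_append[OF le] map_append)
  finally show ?thesis using \<open>1 \<le> length s\<close> by simp
qed

lemma length_wpow_exit_word [simp]: "length (wpow w q r) = length w + (r - 1) * q"
  using exit length_wpow[OF step] by (simp add: exit_word_def)

lemma length_exit_word_ge: "length w + 2 \<le> length (p @ wpow w q r @ s)"
  using exit by (simp add: exit_word_def)

lemma exit_word_nth_inner:
  assumes "1 \<le> k" and "k + 2 \<le> length (p @ wpow w q r @ s)"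
  shows "(p @ wpow w q r @ s) ! k = w ! ((q + k - length p) mod q)"
proof -
  from exit have "1 \<le> r" "length p \<le> q"
    by (auto simp: exit_word_def)
  then have "r * q = (r - 1) * q + q" by (cases r) auto
  moreover have "length (p @ wpow w q r @ s) = length p + length w + (r - 1) * q + length s"
    by simp
  ultimately have "k - 1 < length w + r * q + length s - 1 - (q + 1 - length p)"
    using assms \<open>length p \<le> q\<close> by linarith
  have "(p @ wpow w q r @ s) ! k = butlast (tl (p @ wpow w q r @ s)) ! (k - 1)"
    using assms by (simp add: nth_butlast nth_tl)
  also have "\<dots> = w ! ((q + 1 - length p + (k - 1)) mod q)"
    using \<open>k - 1 < _\<close> by (simp add: exit_word_inner)
  finally show ?thesis using assms(1) \<open>length p \<le> q\<close> by simp
qed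

lemma exit_word_nth_periodic:
  assumes "1 \<le> k" and "k + q + 2 \<le> length (p @ wpow w q r @ s)"
  shows "(p @ wpow w q r @ s) ! k = (p @ wpow w q r @ s) ! (k + q)"
proof -
  from exit have "length p \<le> q" by (simp add: exit_word_def)
  then have "q + (k + q) - length p = (q + k - length p) + q" by simp
  then show ?thesis using assms by (simp add: exit_word_nth_inner)
qed

lemma exit_word_nth_0_neq: "(p @ wpow w q r @ s) ! 0 \<noteq> (p @ wpow w q r @ s) ! q"
proof
  from exit have "p \<noteq> []" "1 \<le> length p" "length p \<le> q"
    and not_suffix: "\<not> suffix (p @ wpow w q r) (wpow w q (Suc r))"
    by (auto simp: exit_word_def)
  from step have "1 \<le> q" "2 * q \<le> length w" by (auto simp: step_ok_def)
  have "q + 2 \<le> length (p @ wpow w q r @ s)"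
    using \<open>2 * q \<le> length w\<close> length_exit_word_ge by linarith
  then have "(p @ wpow w q r @ s) ! q = w ! ((q + q - length p) mod q)"
    using \<open>1 \<le> q\<close> by (simp add: exit_word_nth_inner)
  also have "q + q - length p = (q - length p) + q" using \<open>length p \<le> q\<close> by simp
  finally have "(p @ wpow w q r @ s) ! q = w ! ((q - length p) mod q)" by simp
  moreover have "(p @ wpow w q r @ s) ! 0 = hd p"
    using \<open>p \<noteq> []\<close> by (simp add: hd_conv_nth nth_append)
  moreover assume "(p @ wpow w q r @ s) ! 0 = (p @ wpow w q r @ s) ! q"
  ultimately have "hd p = w ! ((q - length p) mod q)" by simp
  then have "p @ wpow w q r = w ! ((q - length p) mod q) # tl p @ wpow w q r"
    using \<open>p \<noteq> []\<close> by (metis list.collapse append_Cons)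
  also have "\<dots> = map (\<lambda>j. w ! (j mod q)) [q - length p..<length w + r * q]"
    using \<open>1 \<le> length p\<close> \<open>length p \<le> q\<close> \<open>2 * q \<le> length w\<close>
    by (simp add: exit_word_tl_p_wpow upt_conv_Cons Suc_diff_le)
  also have "\<dots> = drop (q - length p) (wpow w q (Suc r))"
    by (simp add: wpow_Suc_eq_map[OF step] drop_map)
  finally show False using not_suffix suffix_drop by metis
qed

lemma exit_word_take_drop:
  assumes "k < r"
  shows "take (length w) (drop (length p + q * k) (p @ wpow w q r @ s)) = w"
proof -
  from assms have "1 \<le> r" and "k \<le> r - 1" by simp_all
  then have le: "q * k + length w \<le> length w + (r - 1) * q"
    by (simp add: mult.commute)
  have "take (length w) (drop (length p + q * k) (p @ wpow w q r @ s))
      = take (length w) (drop (q * k) (wpow w q r @ s))" by simp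
  also have "\<dots> = take (length w) (drop (q * k) (wpow w q r))"
    by (rule take_drop_append_left) (use le in simp)
  also have "\<dots> = w"
    unfolding wpow_eq_map[OF step \<open>1 \<le> r\<close>] by (rule take_drop_map_nth_mod[OF step le])
  finally show ?thesis .
qed

end

lemma map_upt_eq_nth: "map x [i..<i + length z] = z \<Longrightarrow> m < length z \<Longrightarrow> x (i + m) = z ! m"
  by (metis add_diff_cancel_left' length_map length_upt nth_map_upt nat_add_left_cancel_less)

lemma subword_eq_map: "0 < l \<Longrightarrow> subword x i (i + l - 1) = map x [i..<i + l]"
  by (simp add: subword_def)

lemma card_le_occ_subword:
  assumes "\<forall>a\<in>A. i \<le> a \<and> a + length w \<le> Suc e \<and> map x [a..<a + length w] = w"
  shows "card A \<le> occ (subword x i e) w"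
proof -
  let ?S = "{j. j + length w \<le> length (subword x i e) \<and> take (length w) (drop j (subword x i e)) = w}"
  have "(\<lambda>a. a - i) ` A \<subseteq> ?S"
  proof
    fix j assume "j \<in> (\<lambda>a. a - i) ` A"
    then obtain a where "a \<in> A" "j = a - i" by blast
    with assms show "j \<in> ?S"
      by (auto simp del: upt_Suc simp add: subword_def take_map drop_map)
  qed
  moreover have "finite ?S" by (rule finite_subset[of _ "{..length (subword x i e)}"]) auto
  moreover have "inj_on (\<lambda>a. a - i) A"
  proof (rule inj_onI)
    fix a b assume "a \<in> A" "b \<in> A" "a - i = b - i"
    moreover from assms \<open>a \<in> A\<close> \<open>b \<in> A\<close> have "i \<le> a" "i \<le> b" by auto
    ultimately show "a = b" by linarith
  qed
  ultimately have "card ((\<lambda>a. a - i) ` A) \<le> card ?S" and "card ((\<lambda>a. a - i) ` A) = card A"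
    by (auto intro: card_mono card_image)
  then show ?thesis unfolding occ_def by simp
qed

lemma exit_word_end_le_next_start:
  assumes step: "step_ok w q"
    and exit: "exit_word L w q p r s" and exit': "exit_word L w q p' r' s'"
    and at: "map x [i..<i + length (p @ wpow w q r @ s)] = p @ wpow w q r @ s"
    and at': "map x [i'..<i' + length (p' @ wpow w q r' @ s')] = p' @ wpow w q r' @ s'"
    and "i < i'"
  shows "i + length (p @ wpow w q r @ s) \<le> i' + q + 1"
proof (rule ccontr)
  assume far: "\<not> i + length (p @ wpow w q r @ s) \<le> i' + q + 1"
  define m where "m = i' - i"
  have "1 \<le> m" "i' = i + m" and m_bound: "m + q + 2 \<le> length (p @ wpow w q r @ s)"
    using \<open>i < i'\<close> far by (auto simp: m_def)
  then have "x i' = (p @ wpow w q r @ s) ! m" and "x (i' + q) = (p @ wpow w q r @ s) ! (m + q)"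
    using map_upt_eq_nth[OF at] by (simp_all add: add.assoc)
  then have "x i' = x (i' + q)"
    using exit_word_nth_periodic[OF step exit \<open>1 \<le> m\<close> m_bound] by simp
  have "q < length (p' @ wpow w q r' @ s')"
    using step length_exit_word_ge[OF step exit'] by (simp add: step_ok_def)
  then have "x (i' + 0) = (p' @ wpow w q r' @ s') ! 0" and "x (i' + q) = (p' @ wpow w q r' @ s') ! q"
    by (simp_all only: map_upt_eq_nth[OF at'])
  with \<open>x i' = x (i' + q)\<close> exit_word_nth_0_neq[OF step exit'] show False by simp
qed

lemma w_occurrences_in_exit_word:
  assumes step: "step_ok w q" and exit: "exit_word L w q p r s"
    and at: "map x [i..<i + length (p @ wpow w q r @ s)] = p @ wpow w q r @ s"
  shows "card ((\<lambda>k. i + length p + q * k) ` {..<r}) = r"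
    and "a \<in> (\<lambda>k. i + length p + q * k) ` {..<r} \<Longrightarrow>
      i \<le> a \<and> a + length w < i + length (p @ wpow w q r @ s) \<and> map x [a..<a + length w] = w"
proof -
  from step have "1 \<le> q" by (simp add: step_ok_def)
  then have "inj_on (\<lambda>k. i + length p + q * k) {..<r}" by (auto simp: inj_on_def)
  then show "card ((\<lambda>k. i + length p + q * k) ` {..<r}) = r" by (simp add: card_image)
next
  assume "a \<in> (\<lambda>k. i + length p + q * k) ` {..<r}"
  then obtain k where "k < r" and a: "a = i + length p + q * k" by blast
  from exit have "1 \<le> length s" by (simp add: exit_word_def)
  from \<open>k < r\<close> have "k \<le> r - 1" by simp
  then have "q * k \<le> (r - 1) * q" by (simp add: mult.commute)
  moreover have "length (p @ wpow w q r @ s) = length p + length w + (r - 1) * q + length s"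
    using length_wpow_exit_word[OF step exit] by simp
  ultimately have bound: "length p + q * k + length w < length (p @ wpow w q r @ s)"
    using \<open>1 \<le> length s\<close> by linarith
  have "map x [a..<a + length w]
      = take (length w) (drop (length p + q * k) (map x [i..<i + length (p @ wpow w q r @ s)]))"
    using bound by (simp add: a take_map drop_map add.assoc)
  also have "\<dots> = take (length w) (drop (length p + q * k) (p @ wpow w q r @ s))"
    by (simp only: at)
  also have "\<dots> = w" by (rule exit_word_take_drop[OF step exit \<open>k < r\<close>])
  finally show "i \<le> a \<and> a + length w < i + length (p @ wpow w q r @ s) \<and> map x [a..<a + length w] = w"
    using bound by (simp add: a)
qed

lemma occ_subword_exit_words_ge:
  assumes step: "step_ok w q"
    and exit: "exit_word L w q p r s" and exit': "exit_word L w q p' r' s'"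
    and at: "map x [i..<i + length (p @ wpow w q r @ s)] = p @ wpow w q r @ s"
    and at': "map x [i'..<i' + length (p' @ wpow w q r' @ s')] = p' @ wpow w q r' @ s'"
    and "i < i'"
  shows "r + r' \<le> occ (subword x i (i' + length (p' @ wpow w q r' @ s') - 1)) w"
proof -
  let ?z = "p @ wpow w q r @ s" and ?z' = "p' @ wpow w q r' @ s'"
  let ?A = "(\<lambda>k. i + length p + q * k) ` {..<r}" and ?A' = "(\<lambda>k. i' + length p' + q * k) ` {..<r'}"
  note occs = w_occurrences_in_exit_word[OF step exit at] and occs' = w_occurrences_in_exit_word[OF step exit' at']
  from step have "q + 1 \<le> length w" by (simp add: step_ok_def)
  have long: "length w + 2 \<le> length ?z'" by (rule length_exit_word_ge[OF step exit'])
  have apart: "i + length ?z \<le> i' + q + 1"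
    by (rule exit_word_end_le_next_start[OF step exit exit' at at' \<open>i < i'\<close>])
  have "a < i'" if "a \<in> ?A" for a
    using occs(2)[OF that] apart \<open>q + 1 \<le> length w\<close> by linarith
  moreover have "i' \<le> a" if "a \<in> ?A'" for a
    using occs'(2)[OF that] by simp
  ultimately have "?A \<inter> ?A' = {}" by fastforce
  then have "r + r' = card (?A \<union> ?A')" by (simp add: card_Un_disjoint occs(1) occs'(1))
  also have "\<dots> \<le> occ (subword x i (i' + length ?z' - 1)) w"
  proof (rule card_le_occ_subword)
    have end': "Suc (i' + length ?z' - 1) = i' + length ?z'" using long by simp
    have "i \<le> a \<and> a + length w \<le> Suc (i' + length ?z' - 1) \<and> map x [a..<a + length w] = w"
      if "a \<in> ?A" for a
      using occs(2)[OF that] apart long \<open>q + 1 \<le> length w\<close> end' by auto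
    moreover have "i \<le> a \<and> a + length w \<le> Suc (i' + length ?z' - 1) \<and> map x [a..<a + length w] = w"
      if "a \<in> ?A'" for a
      using occs'(2)[OF that] \<open>i < i'\<close> end' by auto
    ultimately show "\<forall>a\<in>?A \<union> ?A'. i \<le> a \<and> a + length w \<le> Suc (i' + length ?z' - 1)
        \<and> map x [a..<a + length w] = w" by blast
  qed
  finally show ?thesis .
qed

theorem mainTheorem15:
  fixes x :: "nat \<Rightarrow> 'a" and w p s p' s' :: "'a list" and q r r' i i' :: nat
  assumes "w \<in> lang x"
    and "minimal_valid_step (lang x) w q"
    and "exit_word (lang x) w q p r s"
    and "exit_word (lang x) w q p' r' s'"
    and "subword x i (i + length (p @ wpow w q r @ s) - 1) = p @ wpow w q r @ s"
    and "subword x i' (i' + length (p' @ wpow w q r' @ s') - 1) = p' @ wpow w q r' @ s'"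
    and "i < i'"
  shows "i' \<ge> i + length (p @ wpow w q r @ s) - length w
       \<and> occ (subword x i (i' + length (p' @ wpow w q r' @ s') - 1)) w \<ge> r + r'"
proof -
  let ?z = "p @ wpow w q r @ s" and ?z' = "p' @ wpow w q r' @ s'"
  have step: "step_ok w q" using assms(2) by (simp add: minimal_valid_step_def valid_step_def)
  then have "q + 1 \<le> length w" by (simp add: step_ok_def)
  have "0 < length ?z" "0 < length ?z'"
    using length_exit_word_ge[OF step assms(3)] length_exit_word_ge[OF step assms(4)] by linarith+
  then have at: "map x [i..<i + length ?z] = ?z" and at': "map x [i'..<i' + length ?z'] = ?z'"
    using subword_eq_map[of _ x i] subword_eq_map[of _ x i'] assms(5,6) by simp_all
  have "i + length ?z \<le> i' + q + 1"
    by (rule exit_word_end_le_next_start[OF step assms(3,4) at at' \<open>i < i'\<close>])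
  then show ?thesis
    using \<open>q + 1 \<le> length w\<close> occ_subword_exit_words_ge[OF step assms(3,4) at at' \<open>i < i'\<close>]
    by simp
qed

end
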